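(* Let $m\in\mathbb{N}$, let $\frac{m-1}{m}<\lambda\le\frac{m}{m+1}$, and let $f(x)=\lfloor\lambda x\rfloor$ for $x\in\mathbb{R}$, with $f^n$ its $n$-fold iterate. Then: - $\lim_{n\to\infty}f^n(x)=0$ for all $x\in[0,+\infty)$; - for each $k\in\{-1,-2,\dots,-m\}$, $\lim_{n\to\infty}f^n(x)=k$ for all $x\in\left[\frac{k}{\lambda},\frac{k+1}{\lambda}\right)$; - $\lim_{n\to\infty}f^n(x)=-m$ for all $x\in\left(-\infty,-\frac{m}{\lambda}\right)$.
   Context: $\lfloor x\rfloor=\max\{m\in\mathbb{Z}: m\le x\}$ denotes the floor function; $\mathbb{N}=\{1,2,\dots\}$. *)

theory Defs
  imports Complex_Main
begin

end

theory Submission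
  imports Defs
begin

text \<open>After one step every orbit of \<open>x \<mapsto> \<lfloor>\<lambda> x\<rfloor>\<close> consists of integers, so it suffices to study
  \<open>j \<mapsto> \<lfloor>\<lambda> j\<rfloor>\<close> on \<open>\<int>\<close>. Since \<open>0 < \<lambda> < 1\<close>, a nonnegative integer strictly decreases until it
  reaches the fixed point \<open>0\<close>. The bounds on \<open>\<lambda>\<close> say exactly that \<open>(1 - \<lambda>) m < 1 \<le> (1 - \<lambda>)(m + 1)\<close>:
  the first makes \<open>-1, \<dots>, -m\<close> fixed points, the second makes every integer below \<open>-m\<close> strictly
  increase, and it never jumps over \<open>-m\<close>.\<close>

lemma funpow_eventually_fixpoint:
  fixes h :: "int \<Rightarrow> int"
  assumes fixed: "h p = p"
    and step: "\<And>i. P i \<Longrightarrow> i \<noteq> p \<Longrightarrow> P (h i) \<and> \<bar>h i - p\<bar> < \<bar>i - p\<bar>"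
    and "P j"
  shows "\<forall>\<^sub>F n in sequentially. (h ^^ n) j = p"
proof -
  have fixed_iter: "(h ^^ k) p = p" for k
    using fixed by (induction k) simp_all
  have "\<forall>i. P i \<longrightarrow> nat \<bar>i - p\<bar> \<le> n \<longrightarrow> (h ^^ n) i = p" for n
  proof (induction n)
    case 0
    then show ?case by simp
  next
    case (Suc n)
    show ?case
    proof (intro allI impI)
      fix i assume i: "P i" "nat \<bar>i - p\<bar> \<le> Suc n"
      show "(h ^^ Suc n) i = p"
      proof (cases "i = p")
        case True
        then show ?thesis using fixed_iter by metis
      next
        case False
        with step i have "P (h i)" "nat \<bar>h i - p\<bar> \<le> n" by fastforce+
        then show ?thesis
          unfolding funpow_Suc_right o_apply using Suc.IH by blast
      qed
    qed
  qed
  then show ?thesis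
    using \<open>P j\<close> by (auto simp: eventually_sequentially)
qed

lemma funpow_semiconj:
  assumes "\<And>j. f (g j) = g (h j)"
  shows "(f ^^ n) (g j) = g ((h ^^ n) j)"
  by (induction n) (simp_all add: assms)

lemma tendsto_funpow_floor_mult:
  fixes lam x :: real
  assumes "\<forall>\<^sub>F n in sequentially. ((\<lambda>j. \<lfloor>lam * of_int j\<rfloor>) ^^ n) \<lfloor>lam * x\<rfloor> = p"
  shows "(\<lambda>n. ((\<lambda>x. real_of_int \<lfloor>lam * x\<rfloor>) ^^ n) x) \<longlonglongrightarrow> real_of_int p"
proof -
  let ?f = "\<lambda>x. real_of_int \<lfloor>lam * x\<rfloor>" and ?h = "\<lambda>j. \<lfloor>lam * of_int j\<rfloor>"
  have "(?f ^^ Suc n) x = real_of_int ((?h ^^ n) \<lfloor>lam * x\<rfloor>)" for n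
    unfolding funpow_Suc_right o_apply by (rule funpow_semiconj) simp
  then have "\<forall>\<^sub>F n in sequentially. (?f ^^ Suc n) x = real_of_int p"
    using assms by (auto elim: eventually_mono)
  then have "(\<lambda>n. (?f ^^ Suc n) x) \<longlonglongrightarrow> real_of_int p"
    by (rule tendsto_eventually)
  then show ?thesis
    by (rule LIMSEQ_imp_Suc)
qed

lemma floor_mult_orbit_nonneg:
  fixes lam :: real
  assumes "0 \<le> lam" "lam < 1" "0 \<le> j"
  shows "\<forall>\<^sub>F n in sequentially. ((\<lambda>j. \<lfloor>lam * of_int j\<rfloor>) ^^ n) j = 0"
  using assms by (intro funpow_eventually_fixpoint[where P = "\<lambda>j. 0 \<le> j"]) (auto simp: floor_less_iff)

lemma floor_mult_eq_self_neg:
  fixes lam :: real and m :: nat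
  assumes "lam \<le> 1" "real m - 1 < lam * real m" "- int m \<le> j" "j \<le> 0"
  shows "\<lfloor>lam * of_int j\<rfloor> = j"
proof -
  have "(1 - lam) * of_int (- j) \<le> (1 - lam) * real m"
    using assms by (intro mult_left_mono) auto
  then have "lam * of_int j < of_int j + 1"
    using assms(2) by (simp add: algebra_simps)
  moreover have "of_int j \<le> lam * of_int j"
    using mult_right_mono_neg[of lam 1 "of_int j"] assms(1,4) by simp
  ultimately show ?thesis
    by (simp add: floor_eq_iff)
qed

lemma floor_mult_increasing_neg:
  fixes lam :: real and m :: nat
  assumes "0 \<le> lam" "real m - 1 < lam * real m" "1 \<le> (1 - lam) * (real m + 1)"
    and "j < - int m"
  shows "j < \<lfloor>lam * of_int j\<rfloor> \<and> \<lfloor>lam * of_int j\<rfloor> \<le> - int m"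
proof
  have j: "real m + 1 \<le> of_int (- j)"
    using assms(4) by linarith
  have "0 \<le> 1 - lam"
    using assms(3) by (smt (verit) mult_nonpos_nonneg of_nat_0_le_iff)
  then have "(1 - lam) * (real m + 1) \<le> (1 - lam) * of_int (- j)"
    using j by (intro mult_left_mono)
  then have "of_int j + 1 \<le> lam * of_int j"
    using assms(3) by (simp add: algebra_simps)
  then show "j < \<lfloor>lam * of_int j\<rfloor>"
    by (simp add: le_floor_iff less_floor_iff)
  have "lam * real m \<le> lam * of_int (- j)"
    using j assms(1) by (intro mult_left_mono) auto
  then have "lam * of_int j < of_int (- int m + 1)"
    using assms(2) by simp
  then have "\<lfloor>lam * of_int j\<rfloor> < - int m + 1"
    by (simp only: floor_less_iff)
  then show "\<lfloor>lam * of_int j\<rfloor> \<le> - int m"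
    by linarith
qed

lemma floor_mult_orbit_below:
  fixes lam :: real and m :: nat
  assumes "0 \<le> lam" "lam \<le> 1" "real m - 1 < lam * real m" "1 \<le> (1 - lam) * (real m + 1)"
    and "j \<le> - int m"
  shows "\<forall>\<^sub>F n in sequentially. ((\<lambda>j. \<lfloor>lam * of_int j\<rfloor>) ^^ n) j = - int m"
proof (rule funpow_eventually_fixpoint[where P = "\<lambda>j. j \<le> - int m"])
  show "\<lfloor>lam * of_int (- int m)\<rfloor> = - int m"
    using floor_mult_eq_self_neg[of lam m "- int m"] assms(2,3) by simp
  show "\<lfloor>lam * of_int i\<rfloor> \<le> - int m \<and> \<bar>\<lfloor>lam * of_int i\<rfloor> - - int m\<bar> < \<bar>i - - int m\<bar>"
    if "i \<le> - int m" "i \<noteq> - int m" for i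
    using floor_mult_increasing_neg[of lam m i] assms that by auto
qed (use assms(5) in simp)

lemma floor_map_parameter_bounds:
  fixes m :: nat and lam :: real
  assumes "m \<ge> 1" "(real m - 1) / real m < lam" "lam \<le> real m / (real m + 1)"
  shows "0 < lam" "lam < 1" "real m - 1 < lam * real m" "1 \<le> (1 - lam) * (real m + 1)"
proof -
  have m: "0 < real m"
    using assms(1) by simp
  show lo: "real m - 1 < lam * real m"
    using assms(2) m by (simp add: field_simps)
  show hi: "1 \<le> (1 - lam) * (real m + 1)"
    using assms(3) m by (simp add: field_simps)
  show "0 < lam"
    using lo assms(1) by (smt (verit) m mult_nonpos_nonneg of_nat_1 of_nat_le_iff)
  show "lam < 1"
    using hi m by (smt (verit) mult_nonpos_nonneg)
qed

theorem theorem2: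
  fixes m :: nat and lam :: real and f :: "real \<Rightarrow> real"
  assumes m: "m \<ge> 1"
    and lam_lo: "(real m - 1) / real m < lam"
    and lam_hi: "lam \<le> real m / (real m + 1)"
    and f_def: "\<And>x. f x = real_of_int \<lfloor>lam * x\<rfloor>"
  shows "(\<forall>x::real. x \<ge> 0 \<longrightarrow> (\<lambda>n. (f ^^ n) x) \<longlonglongrightarrow> 0)
    \<and> (\<forall>k::int. - int m \<le> k \<and> k \<le> -1 \<longrightarrow>
         (\<forall>x::real. x \<in> {real_of_int k / lam ..< (real_of_int k + 1) / lam} \<longrightarrow>
            (\<lambda>n. (f ^^ n) x) \<longlonglongrightarrow> real_of_int k))
    \<and> (\<forall>x::real. x < - real m / lam \<longrightarrow> (\<lambda>n. (f ^^ n) x) \<longlonglongrightarrow> - real m)"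
proof -
  note bounds = floor_map_parameter_bounds[OF m lam_lo lam_hi]
  have f_eq: "f = (\<lambda>x. real_of_int \<lfloor>lam * x\<rfloor>)"
    using f_def by auto
  have "(\<lambda>n. (f ^^ n) x) \<longlonglongrightarrow> 0" if "x \<ge> 0" for x
    using tendsto_funpow_floor_mult[OF floor_mult_orbit_nonneg, of lam x] that bounds(1,2)
    unfolding f_eq by simp
  moreover have "(\<lambda>n. (f ^^ n) x) \<longlonglongrightarrow> real_of_int k"
    if k: "- int m \<le> k" "k \<le> -1" and x: "x \<in> {real_of_int k / lam ..< (real_of_int k + 1) / lam}"
    for k x
  proof -
    have "\<lfloor>lam * of_int k\<rfloor> = k"
      using floor_mult_eq_self_neg bounds(2,3) k by simp
    then have "\<forall>\<^sub>F n in sequentially. ((\<lambda>j. \<lfloor>lam * of_int j\<rfloor>) ^^ n) k = k"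
      by (rule funpow_eventually_fixpoint[where P = "\<lambda>j. j = k"]) auto
    moreover have "\<lfloor>lam * x\<rfloor> = k"
      using x bounds(1) by (simp add: floor_eq_iff field_simps)
    ultimately show ?thesis
      using tendsto_funpow_floor_mult unfolding f_eq by metis
  qed
  moreover have "(\<lambda>n. (f ^^ n) x) \<longlonglongrightarrow> - real m" if "x < - real m / lam" for x
  proof -
    have "\<lfloor>lam * x\<rfloor> \<le> - int m"
      using that bounds(1) by (simp add: field_simps floor_le_iff)
    with bounds show ?thesis
      using tendsto_funpow_floor_mult[OF floor_mult_orbit_below] unfolding f_eq by simp
  qed
  ultimately show ?thesis
    by blast
qed

end
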